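(* Let $\mu>0$, let $G$ be an $n$-vertex graph and let $\mathcal{F}$ be a $\mu n$-bounded incompatibility system over $G$. Then: (i) For every path $P$ in $G$, there are at most $\sqrt{\mu}\,n$ vertices of $G$ that are $2\sqrt{\mu}$-bad for $P$; the same holds for every cycle $C$ in $G$. (ii) For every vertex $v$, there are at most $\sqrt{\mu}\,n$ vertices that are $\sqrt{\mu}$-correlated with $v$.
   Context: All graphs are finite and simple. An incompatibility system $\mathcal{F}$ over $G=(V,E)$ is a family $\{F_v\}_{v\in V}$ where each $F_v$ is a set of unordered pairs $\{e,e'\}$ of distinct edges with $e\cap e'=\{v\}$; edges $e,e'$ are incompatible if $\{e,e'\}\in F_v$ for some $v$, compatible otherwise. For a positive real $\Delta$, $\mathcal{F}$ is $\Delta$-bounded if for every vertex $v$ and edge $e\ni v$, at most $\Delta$ other edges $e'\ni v$ satisfy $\{e,e'\}\in F_v$. For a path $P=(v_0,\dots,v_\ell)$, $|P|$ denotes its number of vertices. For a vertex $w$ (not necessarily on $P$), a vertex $v_i\in V(P)$ adjacent to $w$ is a bad neighbor of $w$ in $P$ if the edge $\{w,v_i\}$ is incompatible with $\{v_i,v_{i-1}\}$ or with $\{v_i,v_{i+1}\}$ (for those of these that are edges of $P$); otherwise it is a good neighbor. For $\gamma>0$, $w$ is $\gamma$-bad for $P$ if it has at least $\gamma|P|$ bad neighbors in $P$, and $\gamma$-good otherwise. The same notions are defined for cycles (indices taken cyclically, $|C|$ the number of vertices). Two vertices $v_1,v_2$ are $\gamma$-correlated if there are at least $\gamma n$ vertices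 $w$ such that $\{v_1,w\}$ and $\{v_2,w\}$ are edges that are incompatible; otherwise they are $\gamma$-uncorrelated. *)

theory Defs
  imports Complex_Main
begin

definition simple_graph :: "'a set \<Rightarrow> 'a set set \<Rightarrow> bool" where
  "simple_graph V E \<longleftrightarrow> finite V \<and> (\<forall>e\<in>E. e \<subseteq> V \<and> card e = 2)"

definition incompat_system :: "'a set \<Rightarrow> 'a set set \<Rightarrow> ('a \<Rightarrow> 'a set set set) \<Rightarrow> bool" where
  "incompat_system V E F \<longleftrightarrow>
     (\<forall>v. F v \<noteq> {} \<longrightarrow> v \<in> V) \<and>
     (\<forall>v\<in>V. \<forall>p\<in>F v. \<exists>e e'. p = {e, e'} \<and> e \<in> E \<and> e' \<in> E \<and> e \<noteq> e' \<and> e \<inter> e' = {v})"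

definition incompatible :: "('a \<Rightarrow> 'a set set set) \<Rightarrow> 'a set \<Rightarrow> 'a set \<Rightarrow> bool" where
  "incompatible F e e' \<longleftrightarrow> (\<exists>v. {e, e'} \<in> F v)"

definition bounded_system :: "'a set \<Rightarrow> 'a set set \<Rightarrow> ('a \<Rightarrow> 'a set set set) \<Rightarrow> real \<Rightarrow> bool" where
  "bounded_system V E F \<Delta> \<longleftrightarrow>
     (\<forall>v\<in>V. \<forall>e\<in>E. v \<in> e \<longrightarrow>
        real (card {e'\<in>E. v \<in> e' \<and> e' \<noteq> e \<and> {e, e'} \<in> F v}) \<le> \<Delta>)"

definition is_path :: "'a set \<Rightarrow> 'a set set \<Rightarrow> 'a list \<Rightarrow> bool" where
  "is_path V E P \<longleftrightarrow> P \<noteq> [] \<and> distinct P \<and> set P \<subseteq> V \<and>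
     (\<forall>i. Suc i < length P \<longrightarrow> {P ! i, P ! Suc i} \<in> E)"

definition is_cycle :: "'a set \<Rightarrow> 'a set set \<Rightarrow> 'a list \<Rightarrow> bool" where
  "is_cycle V E C \<longleftrightarrow> length C \<ge> 3 \<and> distinct C \<and> set C \<subseteq> V \<and>
     (\<forall>i < length C. {C ! i, C ! (Suc i mod length C)} \<in> E)"

definition path_bad_nbr :: "'a set set \<Rightarrow> ('a \<Rightarrow> 'a set set set) \<Rightarrow> 'a list \<Rightarrow> 'a \<Rightarrow> nat \<Rightarrow> bool" where
  "path_bad_nbr E F P w i \<longleftrightarrow> i < length P \<and> {w, P ! i} \<in> E \<and>
     ((0 < i \<and> incompatible F {w, P ! i} {P ! i, P ! (i - 1)}) \<or>
      (Suc i < length P \<and> incompatible F {w, P ! i} {P ! i, P ! Suc i}))"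

definition cycle_bad_nbr :: "'a set set \<Rightarrow> ('a \<Rightarrow> 'a set set set) \<Rightarrow> 'a list \<Rightarrow> 'a \<Rightarrow> nat \<Rightarrow> bool" where
  "cycle_bad_nbr E F C w i \<longleftrightarrow> i < length C \<and> {w, C ! i} \<in> E \<and>
     (incompatible F {w, C ! i} {C ! i, C ! ((i + length C - 1) mod length C)} \<or>
      incompatible F {w, C ! i} {C ! i, C ! (Suc i mod length C)})"

definition path_gamma_bad :: "'a set set \<Rightarrow> ('a \<Rightarrow> 'a set set set) \<Rightarrow> real \<Rightarrow> 'a list \<Rightarrow> 'a \<Rightarrow> bool" where
  "path_gamma_bad E F \<gamma> P w \<longleftrightarrow>
     real (card {i. path_bad_nbr E F P w i}) \<ge> \<gamma> * real (length P)"

definition cycle_gamma_bad :: "'a set set \<Rightarrow> ('a \<Rightarrow> 'a set set set) \<Rightarrow> real \<Rightarrow> 'a list \<Rightarrow> 'a \<Rightarrow> bool" where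
  "cycle_gamma_bad E F \<gamma> C w \<longleftrightarrow>
     real (card {i. cycle_bad_nbr E F C w i}) \<ge> \<gamma> * real (length C)"

definition correlated :: "'a set \<Rightarrow> 'a set set \<Rightarrow> ('a \<Rightarrow> 'a set set set) \<Rightarrow> real \<Rightarrow> 'a \<Rightarrow> 'a \<Rightarrow> bool" where
  "correlated V E F \<gamma> v1 v2 \<longleftrightarrow>
     real (card {w\<in>V. {v1, w} \<in> E \<and> {v2, w} \<in> E \<and> incompatible F {v1, w} {v2, w}})
       \<ge> \<gamma> * real (card V)"

end

theory Submission
  imports Defs
begin

text \<open>Double counting. Fix a path (or cycle) of length L and count the pairs (w, i) such that
  the i-th vertex of the path is a bad neighbour of w. A bad neighbour is witnessed by one of the
  at most two path edges at that vertex, and by \<mu>n-boundedness at most \<mu>n vertices w send an edge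
  to it that is incompatible with a given path edge; so there are at most 2\<mu>nL such pairs. Every
  2\<surd>\<mu>-bad vertex contributes at least 2\<surd>\<mu>L pairs, hence there are at most \<surd>\<mu>n of them.
  Correlation is handled in the same way, counting pairs (u, w) with {v,w} and {u,w} incompatible:
  each w admits at most \<mu>n such u, and each \<surd>\<mu>-correlated u accounts for at least \<surd>\<mu>n of them.\<close>

lemma double_counting_le:
  fixes R :: "'a \<Rightarrow> 'b \<Rightarrow> bool" and a b :: real
  assumes "finite S" "finite I"
    and "\<forall>w\<in>S. a \<le> real (card {i\<in>I. R w i})"
    and "\<forall>i\<in>I. real (card {w\<in>S. R w i}) \<le> b"
  shows "real (card S) * a \<le> real (card I) * b"
proof -
  have count: "real (card {x\<in>X. P x}) = (\<Sum>x\<in>X. if P x then 1 else 0)" if "finite X" for X P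
    using that by (simp add: sum.If_cases Int_def conj_commute)
  have "real (card S) * a \<le> (\<Sum>w\<in>S. real (card {i\<in>I. R w i}))"
    using sum_mono[of S "\<lambda>_. a"] assms(3) by simp
  also have "\<dots> = (\<Sum>w\<in>S. \<Sum>i\<in>I. (if R w i then 1 else 0::real))"
    using count[OF assms(2)] by simp
  also have "\<dots> = (\<Sum>i\<in>I. \<Sum>w\<in>S. (if R w i then 1 else 0::real))"
    by (rule sum.swap)
  also have "\<dots> = (\<Sum>i\<in>I. real (card {w\<in>S. R w i}))"
    using count[OF assms(1)] by simp
  also have "\<dots> \<le> real (card I) * b"
    using sum_mono[of I _ "\<lambda>_. b"] assms(4) by simp
  finally show ?thesis .
qed

lemma card_heavy_le:
  fixes R :: "'a \<Rightarrow> 'b \<Rightarrow> bool" and \<gamma> D :: real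
  assumes "finite S" "finite I" "I \<noteq> {}" "\<gamma> > 0"
    and "\<forall>w\<in>S. \<gamma> * real (card I) \<le> real (card {i\<in>I. R w i})"
    and "\<forall>i\<in>I. real (card {w\<in>S. R w i}) \<le> D"
  shows "real (card S) \<le> D / \<gamma>"
proof -
  have "real (card S) * (\<gamma> * real (card I)) \<le> real (card I) * D"
    using double_counting_le[OF assms(1,2,5,6)] .
  moreover have "real (card I) > 0"
    using assms(2,3) by (simp add: card_gt_0_iff)
  ultimately have "real (card S) * \<gamma> \<le> D"
    by (simp add: algebra_simps)
  then show ?thesis
    using assms(4) by (simp add: field_simps)
qed

lemma simple_graph_edge_neq:
  assumes "simple_graph V E" "{w, v} \<in> E"
  shows "w \<noteq> v"
  using assms unfolding simple_graph_def by fastforce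

lemma simple_graph_finite_edges:
  assumes "simple_graph V E"
  shows "finite E"
proof -
  have "E \<subseteq> Pow V" "finite V"
    using assms unfolding simple_graph_def by auto
  then show ?thesis
    by (meson finite_Pow_iff finite_subset)
qed

lemma incompat_system_pair:
  assumes sys: "incompat_system V E F" and p: "{e, f} \<in> F x"
  shows "e \<in> E" "f \<in> E" "e \<noteq> f" "e \<inter> f = {x}"
proof -
  have "x \<in> V"
    using sys p unfolding incompat_system_def by blast
  then have "\<exists>e' f'. {e, f} = {e', f'} \<and> e' \<in> E \<and> f' \<in> E \<and> e' \<noteq> f' \<and> e' \<inter> f' = {x}"
    using sys p unfolding incompat_system_def by blast
  then obtain e' f' where "{e, f} = {e', f'}" "e' \<in> E" "f' \<in> E" "e' \<noteq> f'" "e' \<inter> f' = {x}"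
    by blast
  then show "e \<in> E" "f \<in> E" "e \<noteq> f" "e \<inter> f = {x}"
    by (auto simp: doubleton_eq_iff)
qed

text \<open>The edges {w, v} incompatible with f are distinct edges at v, all of them counted in the
  \<Delta>-boundedness condition for (v, f).\<close>

lemma card_incompatible_with_edge_le:
  assumes sg: "simple_graph V E" and sys: "incompat_system V E F"
    and bd: "bounded_system V E F D"
    and "v \<in> V" "f \<in> E" "v \<in> f"
  shows "real (card {w\<in>V. {w, v} \<in> E \<and> incompatible F {w, v} f}) \<le> D"
proof -
  let ?A = "{w\<in>V. {w, v} \<in> E \<and> incompatible F {w, v} f}"
  let ?T = "{e'\<in>E. v \<in> e' \<and> e' \<noteq> f \<and> {f, e'} \<in> F v}"
  have into: "{w, v} \<in> ?T" if w: "w \<in> ?A" for w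
  proof -
    obtain x where x: "{{w, v}, f} \<in> F x"
      using w unfolding incompatible_def by blast
    have ne: "{w, v} \<noteq> f" and meet: "{w, v} \<inter> f = {x}"
      using incompat_system_pair[OF sys x] by auto
    have "x = v"
    proof -
      have "v \<in> {w, v} \<inter> f"
        using \<open>v \<in> f\<close> by simp
      then show ?thesis
        using meet by simp
    qed
    then have "{f, {w, v}} \<in> F v"
      using x by (simp only: insert_commute)
    then show ?thesis
      using w ne by blast
  qed
  have "inj_on (\<lambda>w. {w, v}) ?A"
  proof (rule inj_onI)
    fix x y assume "x \<in> ?A" "y \<in> ?A" and eq: "{x, v} = {y, v}"
    then have "x \<noteq> v" "y \<noteq> v"
      using simple_graph_edge_neq[OF sg] by blast+
    then show "x = y"
      using eq by (metis doubleton_eq_iff)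
  qed
  moreover have "?T \<subseteq> E" "finite E"
    using simple_graph_finite_edges[OF sg] by auto
  ultimately have "card ?A \<le> card ?T"
    using into by (intro card_inj_on_le) (auto intro: finite_subset)
  moreover have "real (card ?T) \<le> D"
    using bd assms(4-6) unfolding bounded_system_def by auto
  ultimately show ?thesis
    by linarith
qed

lemma card_incompatible_with_edges_le:
  assumes sg: "simple_graph V E" and sys: "incompat_system V E F"
    and bd: "bounded_system V E F D"
    and "v \<in> V" "finite Fs" "\<forall>f\<in>Fs. f \<in> E \<and> v \<in> f"
  shows "real (card {w\<in>V. {w, v} \<in> E \<and> (\<exists>f\<in>Fs. incompatible F {w, v} f)})
           \<le> real (card Fs) * D"
proof -
  let ?A = "\<lambda>f. {w\<in>V. {w, v} \<in> E \<and> incompatible F {w, v} f}"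
  have "{w\<in>V. {w, v} \<in> E \<and> (\<exists>f\<in>Fs. incompatible F {w, v} f)} = (\<Union>f\<in>Fs. ?A f)"
    by blast
  then have "card {w\<in>V. {w, v} \<in> E \<and> (\<exists>f\<in>Fs. incompatible F {w, v} f)} \<le> (\<Sum>f\<in>Fs. card (?A f))"
    by (simp add: card_UN_le[OF \<open>finite Fs\<close>])
  then have "real (card {w\<in>V. {w, v} \<in> E \<and> (\<exists>f\<in>Fs. incompatible F {w, v} f)})
               \<le> (\<Sum>f\<in>Fs. real (card (?A f)))"
    unfolding of_nat_sum[symmetric] by (rule of_nat_mono)
  also have "\<dots> \<le> (\<Sum>f\<in>Fs. D)"
    using assms card_incompatible_with_edge_le[OF sg sys bd] by (intro sum_mono) auto
  finally show ?thesis
    by simp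
qed

lemma path_bad_nbr_witness:
  assumes "path_bad_nbr E F P w i"
  shows "\<exists>j. j < length P \<and> (Suc j = i \<or> j = Suc i) \<and> incompatible F {w, P ! i} {P ! i, P ! j}"
proof -
  consider "i < length P" "0 < i" "incompatible F {w, P ! i} {P ! i, P ! (i - 1)}"
    | "Suc i < length P" "incompatible F {w, P ! i} {P ! i, P ! Suc i}"
    using assms unfolding path_bad_nbr_def by blast
  then show ?thesis
  proof cases
    case 1
    then show ?thesis
      by (intro exI[of _ "i - 1"]) auto
  next
    case 2
    then show ?thesis
      by (intro exI[of _ "Suc i"]) auto
  qed
qed

lemma card_path_bad_nbr_le:
  assumes sg: "simple_graph V E" and sys: "incompat_system V E F"
    and bd: "bounded_system V E F D" and "D \<ge> 0"
    and P: "is_path V E P" and i: "i < length P"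
  shows "real (card {w\<in>V. path_bad_nbr E F P w i}) \<le> 2 * D"
proof -
  let ?Fs = "{{P ! i, P ! j} | j. j < length P \<and> (Suc j = i \<or> j = Suc i)}"
  have vV: "P ! i \<in> V"
    using P i unfolding is_path_def by auto
  have "{P ! i, P ! j} \<in> E" if "j < length P" "Suc j = i \<or> j = Suc i" for j
  proof -
    have "\<forall>k. Suc k < length P \<longrightarrow> {P ! k, P ! Suc k} \<in> E"
      using P unfolding is_path_def by blast
    then show ?thesis
      using that i by (auto simp: insert_commute)
  qed
  then have edges: "\<forall>f\<in>?Fs. f \<in> E \<and> P ! i \<in> f"
    by blast
  have "?Fs \<subseteq> {{P ! i, P ! (i - 1)}, {P ! i, P ! Suc i}}"
    by auto
  then have "card ?Fs \<le> card {{P ! i, P ! (i - 1)}, {P ! i, P ! Suc i}}"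
    by (rule card_mono[rotated]) simp
  also have "\<dots> \<le> 2"
    by (simp add: card_insert_if)
  finally have card_Fs: "real (card ?Fs) \<le> 2"
    by simp
  have fin_Fs: "finite ?Fs"
    using finite_subset[OF _ simple_graph_finite_edges[OF sg]] edges by blast
  have "{w\<in>V. path_bad_nbr E F P w i}
          \<subseteq> {w\<in>V. {w, P ! i} \<in> E \<and> (\<exists>f\<in>?Fs. incompatible F {w, P ! i} f)}"
  proof safe
    fix w assume "path_bad_nbr E F P w i"
    then obtain j where "j < length P" "Suc j = i \<or> j = Suc i"
      "incompatible F {w, P ! i} {P ! i, P ! j}"
      using path_bad_nbr_witness[of E F P w i] by blast
    then show "\<exists>f\<in>?Fs. incompatible F {w, P ! i} f"
      by (intro bexI[of _ "{P ! i, P ! j}"]) auto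
  qed (auto simp: path_bad_nbr_def)
  then have "real (card {w\<in>V. path_bad_nbr E F P w i})
               \<le> real (card {w\<in>V. {w, P ! i} \<in> E \<and> (\<exists>f\<in>?Fs. incompatible F {w, P ! i} f)})"
    using sg unfolding simple_graph_def by (simp add: card_mono)
  also have "\<dots> \<le> real (card ?Fs) * D"
    by (rule card_incompatible_with_edges_le[OF sg sys bd vV fin_Fs edges])
  also have "\<dots> \<le> 2 * D"
    using card_Fs \<open>D \<ge> 0\<close> by (rule mult_right_mono)
  finally show ?thesis .
qed

lemma card_path_bad_vertices_le:
  assumes sg: "simple_graph V E" and sys: "incompat_system V E F"
    and bd: "bounded_system V E F D" and "D \<ge> 0" "\<gamma> > 0"
    and P: "is_path V E P"
  shows "real (card {w\<in>V. path_gamma_bad E F \<gamma> P w}) \<le> 2 * D / \<gamma>"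
proof -
  let ?S = "{w\<in>V. path_gamma_bad E F \<gamma> P w}"
  have finV: "finite V"
    using sg unfolding simple_graph_def by blast
  have "real (card {w\<in>?S. path_bad_nbr E F P w i}) \<le> 2 * D" if "i < length P" for i
  proof -
    have "card {w\<in>?S. path_bad_nbr E F P w i} \<le> card {w\<in>V. path_bad_nbr E F P w i}"
      using finV by (intro card_mono) auto
    then show ?thesis
      using card_path_bad_nbr_le[OF sg sys bd \<open>D \<ge> 0\<close> P that] by linarith
  qed
  moreover have "{i\<in>{..<length P}. path_bad_nbr E F P w i} = {i. path_bad_nbr E F P w i}" for w
    unfolding path_bad_nbr_def by auto
  moreover have "{..<length P} \<noteq> {}"
    using P unfolding is_path_def by auto
  ultimately show ?thesis
    using finV \<open>\<gamma> > 0\<close> card_heavy_le[of ?S "{..<length P}" \<gamma> "path_bad_nbr E F P" "2 * D"]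
    unfolding path_gamma_bad_def by auto
qed

lemma cycle_pred_edge:
  assumes C: "is_cycle V E C" and "i < length C"
  shows "{C ! i, C ! ((i + length C - 1) mod length C)} \<in> E"
proof -
  let ?L = "length C"
  let ?j = "(i + ?L - 1) mod ?L"
  have L: "?L > 0"
    using C unfolding is_cycle_def by linarith
  have "Suc ?j mod ?L = Suc (i + ?L - 1) mod ?L"
    by (simp add: mod_Suc_eq)
  also have "\<dots> = i"
    using L \<open>i < ?L\<close> by simp
  finally have "Suc ?j mod ?L = i" .
  moreover have "{C ! ?j, C ! (Suc ?j mod ?L)} \<in> E"
    using C L unfolding is_cycle_def by simp
  ultimately show ?thesis
    by (simp add: insert_commute)
qed

lemma card_cycle_bad_nbr_le:
  assumes sg: "simple_graph V E" and sys: "incompat_system V E F"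
    and bd: "bounded_system V E F D" and "D \<ge> 0"
    and C: "is_cycle V E C" and i: "i < length C"
  shows "real (card {w\<in>V. cycle_bad_nbr E F C w i}) \<le> 2 * D"
proof -
  let ?L = "length C"
  let ?Fs = "{{C ! i, C ! ((i + ?L - 1) mod ?L)}, {C ! i, C ! (Suc i mod ?L)}}"
  have vV: "C ! i \<in> V"
    using C i unfolding is_cycle_def by auto
  have edges: "\<forall>f\<in>?Fs. f \<in> E \<and> C ! i \<in> f"
    using cycle_pred_edge[OF C i] C i unfolding is_cycle_def by auto
  have card_Fs: "real (card ?Fs) \<le> 2"
    by (simp add: card_insert_if)
  have "{w\<in>V. cycle_bad_nbr E F C w i}
          \<subseteq> {w\<in>V. {w, C ! i} \<in> E \<and> (\<exists>f\<in>?Fs. incompatible F {w, C ! i} f)}"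
    unfolding cycle_bad_nbr_def by blast
  then have "real (card {w\<in>V. cycle_bad_nbr E F C w i})
               \<le> real (card {w\<in>V. {w, C ! i} \<in> E \<and> (\<exists>f\<in>?Fs. incompatible F {w, C ! i} f)})"
    using sg unfolding simple_graph_def by (simp add: card_mono)
  also have "\<dots> \<le> real (card ?Fs) * D"
    by (rule card_incompatible_with_edges_le[OF sg sys bd vV _ edges]) simp
  also have "\<dots> \<le> 2 * D"
    using card_Fs \<open>D \<ge> 0\<close> by (rule mult_right_mono)
  finally show ?thesis .
qed

lemma card_cycle_bad_vertices_le:
  assumes sg: "simple_graph V E" and sys: "incompat_system V E F"
    and bd: "bounded_system V E F D" and "D \<ge> 0" "\<gamma> > 0"
    and C: "is_cycle V E C"
  shows "real (card {w\<in>V. cycle_gamma_bad E F \<gamma> C w}) \<le> 2 * D / \<gamma>"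
proof -
  let ?S = "{w\<in>V. cycle_gamma_bad E F \<gamma> C w}"
  have finV: "finite V"
    using sg unfolding simple_graph_def by blast
  have "real (card {w\<in>?S. cycle_bad_nbr E F C w i}) \<le> 2 * D" if "i < length C" for i
  proof -
    have "card {w\<in>?S. cycle_bad_nbr E F C w i} \<le> card {w\<in>V. cycle_bad_nbr E F C w i}"
      using finV by (intro card_mono) auto
    then show ?thesis
      using card_cycle_bad_nbr_le[OF sg sys bd \<open>D \<ge> 0\<close> C that] by linarith
  qed
  moreover have "{i\<in>{..<length C}. cycle_bad_nbr E F C w i} = {i. cycle_bad_nbr E F C w i}" for w
    unfolding cycle_bad_nbr_def by auto
  moreover have "{..<length C} \<noteq> {}"
    using C unfolding is_cycle_def by fastforce
  ultimately show ?thesis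
    using finV \<open>\<gamma> > 0\<close> card_heavy_le[of ?S "{..<length C}" \<gamma> "cycle_bad_nbr E F C" "2 * D"]
    unfolding cycle_gamma_bad_def by auto
qed

lemma card_incompatible_at_common_nbr_le:
  assumes sg: "simple_graph V E" and sys: "incompat_system V E F"
    and bd: "bounded_system V E F D" and "D \<ge> 0" "w \<in> V"
  shows "real (card {u\<in>V. {v, w} \<in> E \<and> {u, w} \<in> E \<and> incompatible F {v, w} {u, w}}) \<le> D"
proof (cases "{w, v} \<in> E")
  case True
  have "{u\<in>V. {v, w} \<in> E \<and> {u, w} \<in> E \<and> incompatible F {v, w} {u, w}}
          \<subseteq> {u\<in>V. {u, w} \<in> E \<and> incompatible F {u, w} {w, v}}"
    by (auto simp: incompatible_def insert_commute)
  then have "real (card {u\<in>V. {v, w} \<in> E \<and> {u, w} \<in> E \<and> incompatible F {v, w} {u, w}})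
               \<le> real (card {u\<in>V. {u, w} \<in> E \<and> incompatible F {u, w} {w, v}})"
    using sg unfolding simple_graph_def by (simp add: card_mono)
  also have "\<dots> \<le> D"
    using card_incompatible_with_edge_le[OF sg sys bd \<open>w \<in> V\<close> True] by simp
  finally show ?thesis .
next
  case False
  then have "{u\<in>V. {v, w} \<in> E \<and> {u, w} \<in> E \<and> incompatible F {v, w} {u, w}} = {}"
    by (auto simp: insert_commute)
  then have "card {u\<in>V. {v, w} \<in> E \<and> {u, w} \<in> E \<and> incompatible F {v, w} {u, w}} = 0"
    by (simp only: card.empty)
  then show ?thesis
    using \<open>D \<ge> 0\<close> by simp
qed

lemma card_correlated_le:
  assumes sg: "simple_graph V E" and sys: "incompat_system V E F"
    and bd: "bounded_system V E F D" and "D \<ge> 0" "\<gamma> > 0"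
    and "v \<in> V"
  shows "real (card {u\<in>V. correlated V E F \<gamma> v u}) \<le> D / \<gamma>"
proof -
  let ?S = "{u\<in>V. correlated V E F \<gamma> v u}"
  let ?R = "\<lambda>u w. {v, w} \<in> E \<and> {u, w} \<in> E \<and> incompatible F {v, w} {u, w}"
  have finV: "finite V"
    using sg unfolding simple_graph_def by blast
  have "real (card {u\<in>?S. ?R u w}) \<le> D" if "w \<in> V" for w
  proof -
    have "card {u\<in>?S. ?R u w} \<le> card {u\<in>V. ?R u w}"
      using finV by (intro card_mono) auto
    then show ?thesis
      using card_incompatible_at_common_nbr_le[OF sg sys bd \<open>D \<ge> 0\<close> that, of v] by linarith
  qed
  moreover have "\<forall>u\<in>?S. \<gamma> * real (card V) \<le> real (card {w\<in>V. ?R u w})"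
    unfolding correlated_def by auto
  moreover have "V \<noteq> {}"
    using \<open>v \<in> V\<close> by blast
  ultimately show ?thesis
    using finV \<open>\<gamma> > 0\<close> card_heavy_le[of ?S V \<gamma> ?R D] by simp
qed

lemma mult_div_sqrt:
  fixes \<mu> n :: real
  assumes "\<mu> > 0"
  shows "\<mu> * n / sqrt \<mu> = sqrt \<mu> * n"
proof -
  have "\<mu> = sqrt \<mu> * sqrt \<mu>"
    using assms by simp
  then show ?thesis
    using assms by (simp add: field_simps)
qed

theorem proposition2p4:
  fixes V :: "'a set" and E :: "'a set set" and F :: "'a \<Rightarrow> 'a set set set" and \<mu> :: real
  assumes "\<mu> > 0"
    and "simple_graph V E"
    and "incompat_system V E F"
    and "bounded_system V E F (\<mu> * real (card V))"
  shows "(\<forall>P. is_path V E P \<longrightarrow>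
            real (card {w\<in>V. path_gamma_bad E F (2 * sqrt \<mu>) P w}) \<le> sqrt \<mu> * real (card V))
       \<and> (\<forall>C. is_cycle V E C \<longrightarrow>
            real (card {w\<in>V. cycle_gamma_bad E F (2 * sqrt \<mu>) C w}) \<le> sqrt \<mu> * real (card V))
       \<and> (\<forall>v\<in>V. real (card {u\<in>V. correlated V E F (sqrt \<mu>) v u}) \<le> sqrt \<mu> * real (card V))"
proof -
  have D: "\<mu> * real (card V) \<ge> 0" and \<gamma>: "sqrt \<mu> > 0" "2 * sqrt \<mu> > 0"
    using assms(1) by auto
  have bound: "2 * (\<mu> * real (card V)) / (2 * sqrt \<mu>) = sqrt \<mu> * real (card V)"
    "\<mu> * real (card V) / sqrt \<mu> = sqrt \<mu> * real (card V)"
    using mult_div_sqrt[OF assms(1)] by simp_all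
  show ?thesis
    using card_path_bad_vertices_le[OF assms(2-4) D \<gamma>(2)]
      card_cycle_bad_vertices_le[OF assms(2-4) D \<gamma>(2)]
      card_correlated_le[OF assms(2-4) D \<gamma>(1)]
    unfolding bound by blast
qed

end
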